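(* Fix $c\in\mathcal{C}'$ with $\mathcal{S}(c)\setminus\{c\}\neq\emptyset$ and fix the values of all messages other than the block $\boldsymbol\lambda_{c,\mathcal{S}(c)}=(\lambda_{c\to s}(\mathbf{x}_s))_{s\in\mathcal{S}(c)\setminus\{c\}}$. For an arbitrary choice of this block, let $(b_c,(b_s)_{s\in\mathcal{S}(c)\setminus\{c\}})$ be the resulting beliefs, and let $(b^*_c,(b^*_s)_{s\in\mathcal{S}(c)\setminus\{c\}})$ be the beliefs obtained when the block is replaced by $\boldsymbol\lambda^*_{c,\mathcal{S}(c)}$. Then $$b^*_s(\mathbf{x}_s)=\frac{1}{|\mathcal{S}(c)\setminus\{c\}|}\max_{\mathbf{x}_{c\setminus s}}\Big[b_c(\mathbf{x}_c)+\sum_{\hat s\in\mathcal{S}(c)\setminus\{c\}}b_{\hat s}(\mathbf{x}_{\hat s})\Big]\quad\forall s\in\mathcal{S}(c)\setminus\{c\},\ \mathbf{x}_s,$$ $$b^*_c(\mathbf{x}_c)=b_c(\mathbf{x}_c)+\sum_{\hat s\in\mathcal{S}(c)\setminus\{c\}}b_{\hat s}(\mathbf{x}_{\hat s})-\sum_{\hat s\in\mathcal{S}(c)\setminus\{c\}}b^*_{\hat s}(\mathbf{x}_{\hat s})\quad\forall\mathbf{x}_c.$$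
   Context: Let $\mathcal{V}=\{1,\dots,n\}$; each variable $x_i$ takes values in a finite set, $\mathbf{x}_s=(x_i)_{i\in s}$ for $s\subseteq\mathcal{V}$. Let $\mathcal{C}$ be a collection of subsets of $\mathcal{V}$ with real potentials $\theta_c(\mathbf{x}_c)$. Let $\mathcal{C}'$ be a collection of subsets of $\mathcal{V}$ and for each $c\in\mathcal{C}'$ let $\mathcal{S}(c)$ be a collection of subsets of $c$ (possibly containing $c$), with $\mathcal{C}'\cup\bigcup_c\mathcal{S}(c)\supseteq\mathcal{C}$; put $\mathcal{T}=\mathcal{C}'\cup\bigcup_{c\in\mathcal{C}'}\mathcal{S}(c)$. Messages are reals $\lambda_{c\to s}(\mathbf{x}_s)$, $c\in\mathcal{C}'$, $s\in\mathcal{S}(c)\setminus\{c\}$. For $t\in\mathcal{T}$: $\hat\theta_t=\mathbb{1}(t\in\mathcal{C})\theta_t$; $\gamma_t(\mathbf{x}_t)=\mathbb{1}(t\in\mathcal{C}')\sum_{\hat s\in\mathcal{S}(t)\setminus\{t\}}\lambda_{t\to\hat s}(\mathbf{x}_{\hat s})$; $\lambda_t(\mathbf{x}_t)=\sum_{c'\in\mathcal{C}':\,t\in\mathcal{S}(c')\setminus\{c'\}}\lambda_{c'\to t}(\mathbf{x}_t)$; beliefs $b_t=\hat\theta_t+\lambda_t-\gamma_t$. For $s\in\mathcal{S}(c)\setminus\{c\}$, $\lambda_s^{-c}(\mathbf{x}_s)=\sum_{\hat c\in\mathcal{C}':\,\hat c\ne c,\ s\in\mathcal{S}(\hat c)\setminus\{\hat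 c\}}\lambda_{\hat c\to s}(\mathbf{x}_s)$ (these and $\lambda_c,\gamma_s$ do not depend on the block). The updated block is $\lambda^*_{c\to s}(\mathbf{x}_s)=-\hat\theta_s(\mathbf{x}_s)+\gamma_s(\mathbf{x}_s)-\lambda_s^{-c}(\mathbf{x}_s)+\frac{1}{|\mathcal{S}(c)\setminus\{c\}|}\max_{\mathbf{x}_{c\setminus s}}[\hat\theta_c(\mathbf{x}_c)+\lambda_c(\mathbf{x}_c)+\sum_{\hat s\in\mathcal{S}(c)\setminus\{c\}}(\hat\theta_{\hat s}-\gamma_{\hat s}+\lambda^{-c}_{\hat s})(\mathbf{x}_{\hat s})]$. *)

theory Defs
  imports Complex_Main "HOL-Library.FuncSet"
begin

text \<open>Variables are indexed by naturals; D i is the finite value set of variable i.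
Partial assignments x_s are extensional functions in PiE s D; x_s of a larger
assignment y is restrict y s.\<close>

definition thetahat :: "nat set set \<Rightarrow> (nat set \<Rightarrow> (nat \<Rightarrow> 'a) \<Rightarrow> real) \<Rightarrow> nat set \<Rightarrow> (nat \<Rightarrow> 'a) \<Rightarrow> real" where
  "thetahat C \<theta> t x = (if t \<in> C then \<theta> t x else 0)"

definition gam :: "nat set set \<Rightarrow> (nat set \<Rightarrow> nat set set) \<Rightarrow> (nat set \<Rightarrow> nat set \<Rightarrow> (nat \<Rightarrow> 'a) \<Rightarrow> real)
    \<Rightarrow> nat set \<Rightarrow> (nat \<Rightarrow> 'a) \<Rightarrow> real" where
  "gam C' S lam t x = (if t \<in> C' then (\<Sum>s\<in>S t - {t}. lam t s (restrict x s)) else 0)"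

definition lamin :: "nat set set \<Rightarrow> (nat set \<Rightarrow> nat set set) \<Rightarrow> (nat set \<Rightarrow> nat set \<Rightarrow> (nat \<Rightarrow> 'a) \<Rightarrow> real)
    \<Rightarrow> nat set \<Rightarrow> (nat \<Rightarrow> 'a) \<Rightarrow> real" where
  "lamin C' S lam t x = (\<Sum>c'\<in>{c'\<in>C'. t \<in> S c' - {c'}}. lam c' t x)"

definition lamminus :: "nat set set \<Rightarrow> (nat set \<Rightarrow> nat set set) \<Rightarrow> (nat set \<Rightarrow> nat set \<Rightarrow> (nat \<Rightarrow> 'a) \<Rightarrow> real)
    \<Rightarrow> nat set \<Rightarrow> nat set \<Rightarrow> (nat \<Rightarrow> 'a) \<Rightarrow> real" where
  "lamminus C' S lam c s x = (\<Sum>c'\<in>{c'\<in>C'. c' \<noteq> c \<and> s \<in> S c' - {c'}}. lam c' s x)"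

definition belief :: "nat set set \<Rightarrow> (nat set \<Rightarrow> (nat \<Rightarrow> 'a) \<Rightarrow> real) \<Rightarrow> nat set set \<Rightarrow> (nat set \<Rightarrow> nat set set)
    \<Rightarrow> (nat set \<Rightarrow> nat set \<Rightarrow> (nat \<Rightarrow> 'a) \<Rightarrow> real) \<Rightarrow> nat set \<Rightarrow> (nat \<Rightarrow> 'a) \<Rightarrow> real" where
  "belief C \<theta> C' S lam t x = thetahat C \<theta> t x + lamin C' S lam t x - gam C' S lam t x"

definition maxext :: "(nat \<Rightarrow> 'a set) \<Rightarrow> nat set \<Rightarrow> nat set \<Rightarrow> ((nat \<Rightarrow> 'a) \<Rightarrow> real) \<Rightarrow> (nat \<Rightarrow> 'a) \<Rightarrow> real" where
  "maxext D c s F xs = Max {F y | y. y \<in> PiE c D \<and> restrict y s = xs}"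

definition lamstar :: "(nat \<Rightarrow> 'a set) \<Rightarrow> nat set set \<Rightarrow> (nat set \<Rightarrow> (nat \<Rightarrow> 'a) \<Rightarrow> real) \<Rightarrow> nat set set
    \<Rightarrow> (nat set \<Rightarrow> nat set set) \<Rightarrow> (nat set \<Rightarrow> nat set \<Rightarrow> (nat \<Rightarrow> 'a) \<Rightarrow> real)
    \<Rightarrow> nat set \<Rightarrow> nat set \<Rightarrow> (nat \<Rightarrow> 'a) \<Rightarrow> real" where
  "lamstar D C \<theta> C' S lam c s xs =
     - thetahat C \<theta> s xs + gam C' S lam s xs - lamminus C' S lam c s xs
     + (1 / real (card (S c - {c}))) *
       maxext D c s (\<lambda>y. thetahat C \<theta> c y + lamin C' S lam c y
          + (\<Sum>s'\<in>S c - {c}. thetahat C \<theta> s' (restrict y s') - gam C' S lam s' (restrict y s')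
                               + lamminus C' S lam c s' (restrict y s'))) xs"

definition updblock :: "(nat \<Rightarrow> 'a set) \<Rightarrow> nat set set \<Rightarrow> (nat set \<Rightarrow> (nat \<Rightarrow> 'a) \<Rightarrow> real) \<Rightarrow> nat set set
    \<Rightarrow> (nat set \<Rightarrow> nat set set) \<Rightarrow> (nat set \<Rightarrow> nat set \<Rightarrow> (nat \<Rightarrow> 'a) \<Rightarrow> real)
    \<Rightarrow> nat set \<Rightarrow> nat set \<Rightarrow> nat set \<Rightarrow> (nat \<Rightarrow> 'a) \<Rightarrow> real" where
  "updblock D C \<theta> C' S lam c = (\<lambda>c0 s. if c0 = c \<and> s \<in> S c - {c} then lamstar D C \<theta> C' S lam c s else lam c0 s)"

end

theory Submission
  imports Defs
begin

text \<open>The update only touches the messages from c. A separator s of c receives exactly one of them,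
so its new belief is the old one with lam c s exchanged for lamstar c s; by construction of lamstar
this cancels all other terms and leaves the scaled max-marginal of b_c + \<Sum>s' b_s'. The clique c sends
all of them, so b_c changes by \<Sum>s (lam c s - lamstar c s), which is exactly the total change of the
separator beliefs.\<close>

lemma lamin_split:
  assumes "finite C'" and "c \<in> C'" and "s \<in> S c - {c}"
  shows "lamin C' S lam s x = lam c s x + lamminus C' S lam c s x"
proof -
  have "{c'\<in>C'. s \<in> S c' - {c'}} = insert c {c'\<in>C'. c' \<noteq> c \<and> s \<in> S c' - {c'}}"
    using assms(2,3) by auto
  then show ?thesis
    unfolding lamin_def lamminus_def by (simp add: assms(1))
qed

lemma updblock_other_sender:
  "c0 \<noteq> c \<Longrightarrow> updblock D C \<theta> C' S lam c c0 s = lam c0 s"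
  unfolding updblock_def by simp

lemma lamminus_updblock:
  "lamminus C' S (updblock D C \<theta> C' S lam c) c s x = lamminus C' S lam c s x"
  unfolding lamminus_def by (auto simp: updblock_other_sender intro: sum.cong)

lemma gam_updblock_other:
  "t \<noteq> c \<Longrightarrow> gam C' S (updblock D C \<theta> C' S lam c) t x = gam C' S lam t x"
  unfolding gam_def by (simp add: updblock_other_sender)

lemma gam_clique:
  "c \<in> C' \<Longrightarrow> gam C' S lam c x = (\<Sum>s\<in>S c - {c}. lam c s (restrict x s))"
  unfolding gam_def by simp

lemma belief_updblock_separator:
  assumes "finite C'" and "c \<in> C'" and s: "s \<in> S c - {c}"
  shows "belief C \<theta> C' S (updblock D C \<theta> C' S lam c) s x
       = belief C \<theta> C' S lam s x - lam c s x + lamstar D C \<theta> C' S lam c s x"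
proof -
  have "s \<noteq> c" using s by blast
  moreover have "updblock D C \<theta> C' S lam c c s = lamstar D C \<theta> C' S lam c s"
    using s unfolding updblock_def by simp
  ultimately show ?thesis
    unfolding belief_def lamin_split[where S=S, OF assms] lamminus_updblock
    by (simp add: gam_updblock_other)
qed

lemma belief_updblock_clique:
  assumes "c \<in> C'"
  shows "belief C \<theta> C' S (updblock D C \<theta> C' S lam c) c x
       = belief C \<theta> C' S lam c x
         + (\<Sum>s\<in>S c - {c}. lam c s (restrict x s) - lamstar D C \<theta> C' S lam c s (restrict x s))"
proof -
  have "lamin C' S (updblock D C \<theta> C' S lam c) c x = lamin C' S lam c x"
    unfolding lamin_def updblock_def by simp
  moreover have "gam C' S (updblock D C \<theta> C' S lam c) c x
               = (\<Sum>s\<in>S c - {c}. lamstar D C \<theta> C' S lam c s (restrict x s))"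
    unfolding gam_clique[OF assms] updblock_def by simp
  ultimately show ?thesis
    unfolding belief_def gam_clique[OF assms] by (simp add: sum_subtractf)
qed

lemma belief_clique_plus_separators:
  assumes "finite C'" and "c \<in> C'"
  shows "belief C \<theta> C' S lam c y + (\<Sum>s\<in>S c - {c}. belief C \<theta> C' S lam s (restrict y s))
       = thetahat C \<theta> c y + lamin C' S lam c y
         + (\<Sum>s\<in>S c - {c}. thetahat C \<theta> s (restrict y s) - gam C' S lam s (restrict y s)
                            + lamminus C' S lam c s (restrict y s))"
proof -
  have "(\<Sum>s\<in>S c - {c}. belief C \<theta> C' S lam s (restrict y s))
      = (\<Sum>s\<in>S c - {c}. lam c s (restrict y s)
           + (thetahat C \<theta> s (restrict y s) - gam C' S lam s (restrict y s)
              + lamminus C' S lam c s (restrict y s)))"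
    by (rule sum.cong) (simp_all add: belief_def lamin_split[where S=S, OF assms])
  then show ?thesis
    unfolding belief_def[of C \<theta> C' S lam c] gam_clique[OF assms(2)] by (simp add: sum.distrib)
qed

lemma belief_updblock_separator_maxext:
  assumes "finite C'" and "c \<in> C'" and s: "s \<in> S c - {c}"
  shows "belief C \<theta> C' S (updblock D C \<theta> C' S lam c) s x
       = (1 / real (card (S c - {c}))) *
         maxext D c s (\<lambda>y. belief C \<theta> C' S lam c y
                           + (\<Sum>s'\<in>S c - {c}. belief C \<theta> C' S lam s' (restrict y s'))) x"
  unfolding belief_updblock_separator[where S=S, OF assms] belief_clique_plus_separators[OF assms(1,2)]
  by (simp add: belief_def lamin_split[where S=S, OF assms] lamstar_def)

lemma belief_updblock_clique_via_separators:
  assumes "finite C'" and "c \<in> C'"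
  shows "belief C \<theta> C' S (updblock D C \<theta> C' S lam c) c x
       = belief C \<theta> C' S lam c x
         + (\<Sum>s\<in>S c - {c}. belief C \<theta> C' S lam s (restrict x s))
         - (\<Sum>s\<in>S c - {c}. belief C \<theta> C' S (updblock D C \<theta> C' S lam c) s (restrict x s))"
proof -
  have "(\<Sum>s\<in>S c - {c}. belief C \<theta> C' S lam s (restrict x s))
      - (\<Sum>s\<in>S c - {c}. belief C \<theta> C' S (updblock D C \<theta> C' S lam c) s (restrict x s))
      = (\<Sum>s\<in>S c - {c}. lam c s (restrict x s) - lamstar D C \<theta> C' S lam c s (restrict x s))"
    unfolding sum_subtractf[symmetric]
    by (rule sum.cong) (simp_all add: belief_updblock_separator[where S=S, OF assms])
  then show ?thesis
    unfolding belief_updblock_clique[OF assms(2)] by simp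
qed

theorem proposition6:
  fixes n :: nat and D :: "nat \<Rightarrow> 'a set"
    and C C' :: "nat set set" and \<theta> :: "nat set \<Rightarrow> (nat \<Rightarrow> 'a) \<Rightarrow> real"
    and S :: "nat set \<Rightarrow> nat set set"
    and lam :: "nat set \<Rightarrow> nat set \<Rightarrow> (nat \<Rightarrow> 'a) \<Rightarrow> real"
    and c :: "nat set"
  assumes dom: "\<forall>i\<in>{1..n}. finite (D i) \<and> D i \<noteq> {}"
    and C_sub: "\<forall>t\<in>C. t \<subseteq> {1..n}"
    and C'_sub: "\<forall>t\<in>C'. t \<subseteq> {1..n}"
    and S_sub: "\<forall>t\<in>C'. \<forall>s\<in>S t. s \<subseteq> t"
    and cover: "C \<subseteq> C' \<union> (\<Union>t\<in>C'. S t)"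
    and c_in: "c \<in> C'"
    and ne: "S c - {c} \<noteq> {}"
  shows "(\<forall>s\<in>S c - {c}. \<forall>xs\<in>PiE s D.
            belief C \<theta> C' S (updblock D C \<theta> C' S lam c) s xs =
              (1 / real (card (S c - {c}))) *
              maxext D c s (\<lambda>y. belief C \<theta> C' S lam c y
                 + (\<Sum>s'\<in>S c - {c}. belief C \<theta> C' S lam s' (restrict y s'))) xs)
       \<and> (\<forall>xc\<in>PiE c D.
            belief C \<theta> C' S (updblock D C \<theta> C' S lam c) c xc =
              belief C \<theta> C' S lam c xc
              + (\<Sum>s'\<in>S c - {c}. belief C \<theta> C' S lam s' (restrict xc s'))
              - (\<Sum>s'\<in>S c - {c}. belief C \<theta> C' S (updblock D C \<theta> C' S lam c) s' (restrict xc s')))"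
proof -
  \<comment> \<open>The identities are algebraic: of the hypotheses only c \<in> C' and finiteness of C' are needed.\<close>
  have fin: "finite C'"
    by (rule finite_subset[of _ "Pow {1..n}"]) (use C'_sub in auto)
  show ?thesis
    using belief_updblock_separator_maxext[where S=S, OF fin c_in]
      belief_updblock_clique_via_separators[where S=S, OF fin c_in]
    by blast
qed

end
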